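(* Let $P$ be a finite set of points in $\mathbb{R}^m$, let $(A,B)$ be an optimal 2-means partition of $P$, let $S\subseteq A$ be the set of low-revenue points of $A$, assume $S\ne\emptyset$, and let $x\in\arg\max_{u\in S}d(u,\rho(A))$. Then for every $u\in S$, $d(u,\rho(B))\le\frac{11}{9}d(x,\rho(A))$.
   Context: Distances are Euclidean: $d(x,y)=\|x-y\|_2$. For finite nonempty $S$, $\rho(S)=\frac{1}{|S|}\sum_{u\in S}u$ and $\Delta_1(S)=\sum_{u\in S}d(u,\rho(S))^2$. A partition $(A,B)$ of $P$ into two nonempty sets is an optimal 2-means partition if it minimizes $\Delta_1(A)+\Delta_1(B)$ among all partitions of $P$ into two nonempty sets. For $i\in A$, $j\in B$, $rev(i,j)=\min\{d(i,j)/\max\{d(i,\rho(A)),d(j,\rho(B))\},\,1\}$ (equal to $1$ if the maximum is $0$). For $u\in A$, $HR_B(u)=\{v\in B: rev(u,v)\ge\frac{1}{10}\}$. A point $u\in A$ is a high-revenue point if $|HR_B(u)|\ge\frac12|B|$, and a low-revenue point otherwise. *)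

theory Defs
  imports "HOL-Analysis.Analysis"
begin

definition centroid :: "'a::euclidean_space set \<Rightarrow> 'a" where
  "centroid S = (1 / real (card S)) *\<^sub>R (\<Sum>u\<in>S. u)"

definition cost1 :: "'a::euclidean_space set \<Rightarrow> real" where
  "cost1 S = (\<Sum>u\<in>S. (dist u (centroid S))\<^sup>2)"

definition two_partition :: "'a set \<Rightarrow> 'a set \<Rightarrow> 'a set \<Rightarrow> bool" where
  "two_partition P A B \<longleftrightarrow> A \<noteq> {} \<and> B \<noteq> {} \<and> A \<inter> B = {} \<and> A \<union> B = P"

definition optimal_2means :: "'a::euclidean_space set \<Rightarrow> 'a set \<Rightarrow> 'a set \<Rightarrow> bool" where
  "optimal_2means P A B \<longleftrightarrow> two_partition P A B \<and>
     (\<forall>A' B'. two_partition P A' B' \<longrightarrow> cost1 A + cost1 B \<le> cost1 A' + cost1 B')"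

definition rev :: "'a::euclidean_space set \<Rightarrow> 'a set \<Rightarrow> 'a \<Rightarrow> 'a \<Rightarrow> real" where
  "rev A B i j = (let M = max (dist i (centroid A)) (dist j (centroid B)) in
     if M = 0 then 1 else min (dist i j / M) 1)"

definition HR :: "'a::euclidean_space set \<Rightarrow> 'a set \<Rightarrow> 'a \<Rightarrow> 'a set" where
  "HR A B u = {v\<in>B. rev A B u v \<ge> 1/10}"

definition high_revenue :: "'a::euclidean_space set \<Rightarrow> 'a set \<Rightarrow> 'a \<Rightarrow> bool" where
  "high_revenue A B u \<longleftrightarrow> real (card (HR A B u)) \<ge> real (card B) / 2"

definition low_revenue_points :: "'a::euclidean_space set \<Rightarrow> 'a set \<Rightarrow> 'a set" where
  "low_revenue_points A B = {u\<in>A. \<not> high_revenue A B u}"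

end

theory Submission
  imports Defs
begin

text \<open>
  By optimality, moving a single point v of B over to A cannot decrease the cost, and
  comparing with the centroids of A and B shows that v lies at least as close to the
  centroid of B as to the centroid of A. A low-revenue point u has, by counting, a
  partner v \<in> B with rev(u,v) < 1/10, i.e. d(u,v) is less than a tenth of
  max(d(u,\<rho>(A)), d(v,\<rho>(B))). Two triangle inequalities through v then bound
  d(u,\<rho>(B)) by 11/9 d(u,\<rho>(A)) \<le> 11/9 d(x,\<rho>(A)).
\<close>

lemma sum_dist_sq_eq_cost1:
  fixes S :: "'a::euclidean_space set"
  assumes "finite S" "S \<noteq> {}"
  shows "(\<Sum>u\<in>S. (dist u c)\<^sup>2) = cost1 S + real (card S) * (dist (centroid S) c)\<^sup>2"
proof -
  define m where "m = centroid S"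
  have "real (card S) *\<^sub>R m = (\<Sum>u\<in>S. u)"
    using assms by (simp add: m_def centroid_def)
  then have deviations_sum_zero: "(\<Sum>u\<in>S. u - m) = 0"
    by (simp add: sum_subtractf sum_constant_scaleR)
  have split_at_m: "(dist u c)\<^sup>2 = (dist u m)\<^sup>2 + 2 * ((u - m) \<bullet> (m - c)) + (dist m c)\<^sup>2" for u
    using dot_norm[of "u - m" "m - c"] by (simp add: dist_norm)
  have "(\<Sum>u\<in>S. (dist u c)\<^sup>2)
      = (\<Sum>u\<in>S. (dist u m)\<^sup>2) + 2 * ((\<Sum>u\<in>S. u - m) \<bullet> (m - c)) + real (card S) * (dist m c)\<^sup>2"
    by (subst sum.cong[OF refl split_at_m]) (simp add: sum.distrib sum_distrib_left inner_sum_left)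
  then show ?thesis
    unfolding deviations_sum_zero by (simp add: cost1_def m_def)
qed

lemma cost1_le_sum_dist_sq:
  fixes S :: "'a::euclidean_space set"
  assumes "finite S" "S \<noteq> {}"
  shows "cost1 S \<le> (\<Sum>u\<in>S. (dist u c)\<^sup>2)"
  using sum_dist_sq_eq_cost1[OF assms] by simp

lemma cost1_remove:
  fixes S :: "'a::euclidean_space set"
  assumes "finite S" "v \<in> S" "S - {v} \<noteq> {}"
  shows "cost1 (S - {v}) + (dist v (centroid S))\<^sup>2 \<le> cost1 S"
proof -
  have "cost1 (S - {v}) \<le> (\<Sum>u\<in>S - {v}. (dist u (centroid S))\<^sup>2)"
    using assms by (intro cost1_le_sum_dist_sq) auto
  moreover have "cost1 S = (\<Sum>u\<in>S - {v}. (dist u (centroid S))\<^sup>2) + (dist v (centroid S))\<^sup>2"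
    unfolding cost1_def using assms by (simp add: sum.remove add.commute)
  ultimately show ?thesis by simp
qed

lemma cost1_insert:
  fixes S :: "'a::euclidean_space set"
  assumes "finite S" "v \<notin> S"
  shows "cost1 (insert v S) \<le> cost1 S + (dist v (centroid S))\<^sup>2"
proof -
  have "cost1 (insert v S) \<le> (\<Sum>u\<in>insert v S. (dist u (centroid S))\<^sup>2)"
    using assms by (intro cost1_le_sum_dist_sq) auto
  also have "\<dots> = cost1 S + (dist v (centroid S))\<^sup>2"
    unfolding cost1_def using assms by simp
  finally show ?thesis .
qed

lemma optimal_2means_finite:
  assumes "finite P" "optimal_2means P A B"
  shows "finite A" "finite B"
  using assms unfolding optimal_2means_def two_partition_def by auto

lemma optimal_2means_dist_centroid_le:
  fixes P A B :: "'a::euclidean_space set"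
  assumes "finite P" "optimal_2means P A B" "v \<in> B"
  shows "dist v (centroid B) \<le> dist v (centroid A)"
proof (cases "B = {v}")
  case True
  then show ?thesis by (simp add: centroid_def)
next
  case False
  have partition: "two_partition P A B"
    and optimal: "\<And>A' B'. two_partition P A' B' \<Longrightarrow> cost1 A + cost1 B \<le> cost1 A' + cost1 B'"
    using assms(2) unfolding optimal_2means_def by auto
  have "B - {v} \<noteq> {}" and "v \<notin> A"
    using False assms(3) partition unfolding two_partition_def by auto
  have "two_partition P (insert v A) (B - {v})"
    using partition assms(3) \<open>B - {v} \<noteq> {}\<close> unfolding two_partition_def by auto
  then have "cost1 A + cost1 B \<le> cost1 (insert v A) + cost1 (B - {v})"
    by (rule optimal)
  moreover have "cost1 (insert v A) \<le> cost1 A + (dist v (centroid A))\<^sup>2"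
    using optimal_2means_finite[OF assms(1,2)] \<open>v \<notin> A\<close> by (intro cost1_insert)
  moreover have "cost1 (B - {v}) + (dist v (centroid B))\<^sup>2 \<le> cost1 B"
    using optimal_2means_finite[OF assms(1,2)] assms(3) \<open>B - {v} \<noteq> {}\<close> by (intro cost1_remove)
  ultimately have "(dist v (centroid B))\<^sup>2 \<le> (dist v (centroid A))\<^sup>2"
    by linarith
  then show ?thesis
    by (simp add: power_mono_iff)
qed

lemma low_revenue_obtains_partner:
  assumes "finite B" "B \<noteq> {}" "u \<in> low_revenue_points A B"
  obtains v where "v \<in> B" "rev A B u v < 1/10"
proof -
  have "real (card (HR A B u)) < real (card B) / 2"
    using assms(3) unfolding low_revenue_points_def high_revenue_def by auto
  moreover have "card B > 0"
    using assms(1,2) by (simp add: card_gt_0_iff)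
  ultimately have "HR A B u \<noteq> B"
    by auto
  moreover have "HR A B u \<subseteq> B"
    unfolding HR_def by auto
  ultimately obtain v where "v \<in> B" "v \<notin> HR A B u"
    by blast
  then show thesis
    using that unfolding HR_def by auto
qed

lemma dist_lt_of_rev_lt:
  assumes "rev A B u v < 1/10"
  shows "dist u v < max (dist u (centroid A)) (dist v (centroid B)) / 10"
proof -
  define M where "M = max (dist u (centroid A)) (dist v (centroid B))"
  have "M \<noteq> 0" and "min (dist u v / M) 1 < 1/10"
    using assms unfolding rev_def M_def[symmetric] Let_def by (auto split: if_splits)
  moreover have "M \<ge> 0"
    unfolding M_def by (simp add: le_max_iff_disj)
  ultimately have "dist u v / M < 1/10" and "M > 0"
    by linarith+
  then show ?thesis
    unfolding M_def[symmetric] by (simp add: divide_less_eq)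
qed

lemma dist_centroid_bound_of_close_partner:
  fixes a b u v :: "'a::metric_space"
  assumes close: "dist u v < max (dist u a) (dist v b) / 10"
    and closer_to_b: "dist v b \<le> dist v a"
  shows "dist u b \<le> 11/9 * dist u a"
proof -
  have via_v: "dist u b \<le> dist u v + dist v b"
    by (rule dist_triangle)
  show ?thesis
  proof (cases "dist v b \<le> dist u a")
    case True
    then show ?thesis
      using close via_v zero_le_dist[of u a] unfolding max_absorb1[OF True] by linarith
  next
    case False
    then have "dist u a \<le> dist v b"
      by simp
    have "dist v a \<le> dist u v + dist u a"
      by (metis dist_commute dist_triangle)
    then show ?thesis
      using False close via_v closer_to_b unfolding max_absorb2[OF \<open>dist u a \<le> dist v b\<close>] by linarith
  qed
qed

theorem mainTheorem7:
  fixes P A B :: "'a::euclidean_space set" and x :: 'a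
  assumes "finite P"
    and "optimal_2means P A B"
    and "low_revenue_points A B \<noteq> {}"
    and "x \<in> low_revenue_points A B"
    and "\<forall>u\<in>low_revenue_points A B. dist u (centroid A) \<le> dist x (centroid A)"
  shows "\<forall>u\<in>low_revenue_points A B. dist u (centroid B) \<le> 11/9 * dist x (centroid A)"
proof
  fix u
  assume u: "u \<in> low_revenue_points A B"
  have "finite B" "B \<noteq> {}"
    using optimal_2means_finite[OF assms(1,2)] assms(2)
    unfolding optimal_2means_def two_partition_def by auto
  then obtain v where "v \<in> B" "rev A B u v < 1/10"
    using u by (rule low_revenue_obtains_partner)
  then have "dist u (centroid B) \<le> 11/9 * dist u (centroid A)"
    using dist_lt_of_rev_lt optimal_2means_dist_centroid_le[OF assms(1,2)]
    by (blast intro: dist_centroid_bound_of_close_partner)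
  also have "\<dots> \<le> 11/9 * dist x (centroid A)"
    using assms(5) u by simp
  finally show "dist u (centroid B) \<le> 11/9 * dist x (centroid A)" .
qed

end
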